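(* Consider the plant $\dot x=f(x,u,w)$ with $x\in\mathbb{R}^n$, $u\in\mathbb{R}^p$, $w\in\mathbb{R}^q$, in closed loop with the state feedback $u=\mathsf{N}(x)$, i.e. $\dot x=f^{\mathrm{cl}}(x,w):=f(x,\mathsf{N}(x),w)$. Let $\mathcal{X}_0\subseteq[\underline{x}_0,\overline{x}_0]$ and $\mathcal{W}\subseteq[\underline{w},\overline{w}]$. Let $\mathsf{F}$ be a decomposition function for $f$, and let $\underline{A},\overline{A},\underline{b},\overline{b}$ and the induced maps $\underline{\mathsf{G}}_{[a,\widehat a]},\overline{\mathsf{G}}_{[a,\widehat a]},\underline{\mathsf{H}},\overline{\mathsf{H}}$ be as in the context. For $s\in\{\mathrm{G},\mathrm{H},\mathrm{L}\}$ consider the embedding system on pairs $(x,\widehat{x})$ defined, for each $i\in\{1,\dots,n\}$, by: - $s=\mathrm{G}$: $\dot x_i=\mathsf{F}_i(x,\widehat{x},\underline{\mathsf{H}}(x,\widehat{x}),\overline{\mathsf{H}}(x,\widehat{x}),\underline{w},\overline{w})$, $\dot{\widehat{x}}_i=\mathsf{F}_i(\widehat{x},x,\overline{\mathsf{H}}(x,\widehat{x}),\underline{\mathsf{H}}(x,\widehat{x}),\overline{w},\underline{w})$; - $s=\mathrm{H}$: $\dot x_i=\mathsf{F}_i(x,\widehat{x},\underline{\mathsf{G}}_{[x,\widehat{x}]}(x,\widehat{x}_{[i:x]}),\overline{\mathsf{G}}_{[x,\widehat{x}]}(x,\widehat{x}_{[i:x]}),\underline{w},\overline{w})$, $\dot{\widehat{x}}_i=\mathsf{F}_i(\widehat{x},x,\overline{\mathsf{G}}_{[x,\widehat{x}]}(x_{[i:\widehat{x}]},\widehat{x}),\underline{\mathsf{G}}_{[x,\widehat{x}]}(x_{[i:\widehat{x}]},\widehat{x}),\overline{w},\underline{w})$;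 - $s=\mathrm{L}$: $\dot x_i=\mathsf{F}_i(x,\widehat{x},\underline{\mathsf{H}}(x,\widehat{x}_{[i:x]}),\overline{\mathsf{H}}(x,\widehat{x}_{[i:x]}),\underline{w},\overline{w})$, $\dot{\widehat{x}}_i=\mathsf{F}_i(\widehat{x},x,\overline{\mathsf{H}}(x_{[i:\widehat{x}]},\widehat{x}),\underline{\mathsf{H}}(x_{[i:\widehat{x}]},\widehat{x}),\overline{w},\underline{w})$. Let $t\mapsto(\underline{x}^s(t),\overline{x}^s(t))$ be the solution of the $s$-embedding system with initial condition $(\underline{x}_0,\overline{x}_0)$, assumed to exist for all $t\ge0$ with $\underline{x}^s(t)\le\overline{x}^s(t)$. Then for every $s\in\{\mathrm{G},\mathrm{H},\mathrm{L}\}$ and every $t\ge0$, $$\mathcal{R}_{f^{\mathrm{cl}}}(t,0,\mathcal{X}_0,\mathcal{W})\subseteq[\underline{x}^s(t),\overline{x}^s(t)].$$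
   Context: Vector inequalities are componentwise; $[x,y]=\{z:x\le z\le y\}$; $\mathcal{T}^{2n}_{\ge0}=\{(x,\widehat x):x\le\widehat x\}$, $\mathcal{T}^{2n}_{\le0}=\{(x,\widehat x):x\ge\widehat x\}$, $\mathcal{T}^{2n}=\mathcal{T}^{2n}_{\ge0}\cup\mathcal{T}^{2n}_{\le0}$. For $v,w\in\mathbb{R}^n$, $v_{[i:w]}$ is the vector equal to $v$ except that its $i$-th entry is $w_i$. For a matrix $M$, $[M]^+=\max(M,0)$, $[M]^-=\min(M,0)$ entrywise. $f$ is locally Lipschitz. The reachable set is $\mathcal{R}_{f^{\mathrm{cl}}}(t,0,\mathcal{X}_0,\mathcal{W})=\{\phi(t,0,x_0,w(\cdot)): x_0\in\mathcal{X}_0,\ w:\mathbb{R}_{\ge0}\to\mathcal{W}\text{ piecewise continuous}\}$, where $\phi$ denotes the trajectory of $\dot x=f^{\mathrm{cl}}(x,w(t))$ (assumed to exist for all $t\ge0$). A decomposition function for $f$ is a locally Lipschitz $\mathsf{F}:\mathcal{T}^{2n}\times\mathcal{T}^{2p}\times\mathcal{T}^{2q}\to\mathbb{R}^n$ such that: (i) $\mathsf{F}(x,x,u,u,w,w)=f(x,u,w)$ for all $x,u,w$; (ii) $\mathsf{F}_i(x,\widehat x,u,\widehat u,w,\widehat w)\le\mathsf{F}_i(y,\widehat y,u,\widehat u,w,\widehat w)$ whenever $x\le y$, $x_i=y_i$ and $\widehat y\le\widehat x$; (iii) $\mathsf{F}_i(x,\widehat x,u,\widehat u,w,\widehat w)\le\mathsf{F}_i(x,\widehat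 x,v,\widehat v,w,\widehat w)$ whenever $u\le v$, $\widehat v\le\widehat u$, and likewise $\mathsf{F}_i(x,\widehat x,u,\widehat u,w,\widehat w)\le\mathsf{F}_i(x,\widehat x,u,\widehat u,\omega,\widehat\omega)$ whenever $w\le\omega$, $\widehat\omega\le\widehat w$. Neural network bounds: $\underline{A},\overline{A}:\mathcal{T}^{2n}_{\ge0}\to\mathbb{R}^{p\times n}$, $\underline{b},\overline{b}:\mathcal{T}^{2n}_{\ge0}\to\mathbb{R}^p$ are functions (e.g. produced by the CROWN algorithm) such that for all $a\le\widehat a$ and $z\in[a,\widehat a]$: $\underline{A}(a,\widehat a)z+\underline{b}(a,\widehat a)\le\mathsf{N}(z)\le\overline{A}(a,\widehat a)z+\overline{b}(a,\widehat a)$. For $a\le\widehat a$: $\underline{\mathsf{G}}_{[a,\widehat a]}(y,\widehat y)=[\underline{A}(a,\widehat a)]^+y+[\underline{A}(a,\widehat a)]^-\widehat y+\underline{b}(a,\widehat a)$, $\overline{\mathsf{G}}_{[a,\widehat a]}(y,\widehat y)=[\overline{A}(a,\widehat a)]^+\widehat y+[\overline{A}(a,\widehat a)]^-y+\overline{b}(a,\widehat a)$; and $\underline{\mathsf{H}}(y,\widehat y)=\underline{\mathsf{G}}_{[y,\widehat y]}(y,\widehat y)$, $\overline{\mathsf{H}}(y,\widehat y)=\overline{\mathsf{G}}_{[y,\widehat y]}(y,\widehat y)$. *)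

theory Defs
  imports "HOL-Analysis.Analysis"
begin

text \<open>Vectors are real^'n (componentwise order is the library order on vec).
  A p x n matrix is real^'n^'p.\<close>

definition loc_lipschitz_on :: "'a::metric_space set \<Rightarrow> ('a \<Rightarrow> 'b::metric_space) \<Rightarrow> bool" where
  "loc_lipschitz_on S g \<longleftrightarrow>
     (\<forall>z\<in>S. \<exists>e>0. \<exists>L. \<forall>a\<in>S \<inter> ball z e. \<forall>b\<in>S \<inter> ball z e. dist (g a) (g b) \<le> L * dist a b)"

definition vupd :: "real^'n \<Rightarrow> 'n \<Rightarrow> real^'n \<Rightarrow> real^'n" where
  "vupd v i w = (\<chi> j. if j = i then w $ i else v $ j)"

definition mat_pos :: "real^'n^'m \<Rightarrow> real^'n^'m" where
  "mat_pos M = (\<chi> i j. max (M $ i $ j) 0)"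

definition mat_neg :: "real^'n^'m \<Rightarrow> real^'n^'m" where
  "mat_neg M = (\<chi> i j. min (M $ i $ j) 0)"

definition T2 :: "('a::ord) \<Rightarrow> 'a \<Rightarrow> bool" where
  "T2 x xh \<longleftrightarrow> x \<le> xh \<or> xh \<le> x"

definition decomp_dom :: "real^'n \<Rightarrow> real^'n \<Rightarrow> real^'p \<Rightarrow> real^'p \<Rightarrow> real^'q \<Rightarrow> real^'q \<Rightarrow> bool" where
  "decomp_dom x xh u uh w wh \<longleftrightarrow> T2 x xh \<and> T2 u uh \<and> T2 w wh"

definition is_decomposition ::
  "(real^'n \<Rightarrow> real^'p \<Rightarrow> real^'q \<Rightarrow> real^'n) \<Rightarrow>
   (real^'n \<Rightarrow> real^'n \<Rightarrow> real^'p \<Rightarrow> real^'p \<Rightarrow> real^'q \<Rightarrow> real^'q \<Rightarrow> real^'n) \<Rightarrow> bool" where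
  "is_decomposition f F \<longleftrightarrow>
     loc_lipschitz_on {(x,xh,u,uh,w,wh). decomp_dom x xh u uh w wh}
       (\<lambda>(x,xh,u,uh,w,wh). F x xh u uh w wh)
   \<and> (\<forall>x u w. F x x u u w w = f x u w)
   \<and> (\<forall>i x xh y yh u uh w wh.
        decomp_dom x xh u uh w wh \<and> decomp_dom y yh u uh w wh \<and>
        x \<le> y \<and> x $ i = y $ i \<and> yh \<le> xh \<longrightarrow>
        F x xh u uh w wh $ i \<le> F y yh u uh w wh $ i)
   \<and> (\<forall>i x xh u uh v vh w wh.
        decomp_dom x xh u uh w wh \<and> decomp_dom x xh v vh w wh \<and>
        u \<le> v \<and> vh \<le> uh \<longrightarrow>
        F x xh u uh w wh $ i \<le> F x xh v vh w wh $ i)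
   \<and> (\<forall>i x xh u uh w wh om omh.
        decomp_dom x xh u uh w wh \<and> decomp_dom x xh u uh om omh \<and>
        w \<le> om \<and> omh \<le> wh \<longrightarrow>
        F x xh u uh w wh $ i \<le> F x xh u uh om omh $ i)"

definition nn_bounds ::
  "(real^'n \<Rightarrow> real^'p) \<Rightarrow> (real^'n \<Rightarrow> real^'n \<Rightarrow> real^'n^'p) \<Rightarrow> (real^'n \<Rightarrow> real^'n \<Rightarrow> real^'n^'p)
   \<Rightarrow> (real^'n \<Rightarrow> real^'n \<Rightarrow> real^'p) \<Rightarrow> (real^'n \<Rightarrow> real^'n \<Rightarrow> real^'p) \<Rightarrow> bool" where
  "nn_bounds N Al Ah bl bh \<longleftrightarrow>
     (\<forall>a ah z. a \<le> ah \<and> z \<in> {a..ah} \<longrightarrow>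
        Al a ah *v z + bl a ah \<le> N z \<and> N z \<le> Ah a ah *v z + bh a ah)"

definition Glo :: "(real^'n \<Rightarrow> real^'n \<Rightarrow> real^'n^'p) \<Rightarrow> (real^'n \<Rightarrow> real^'n \<Rightarrow> real^'p)
   \<Rightarrow> real^'n \<Rightarrow> real^'n \<Rightarrow> real^'n \<Rightarrow> real^'n \<Rightarrow> real^'p" where
  "Glo Al bl a ah y yh = mat_pos (Al a ah) *v y + mat_neg (Al a ah) *v yh + bl a ah"

definition Ghi :: "(real^'n \<Rightarrow> real^'n \<Rightarrow> real^'n^'p) \<Rightarrow> (real^'n \<Rightarrow> real^'n \<Rightarrow> real^'p)
   \<Rightarrow> real^'n \<Rightarrow> real^'n \<Rightarrow> real^'n \<Rightarrow> real^'n \<Rightarrow> real^'p" where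
  "Ghi Ah bh a ah y yh = mat_pos (Ah a ah) *v yh + mat_neg (Ah a ah) *v y + bh a ah"

definition Hlo :: "(real^'n \<Rightarrow> real^'n \<Rightarrow> real^'n^'p) \<Rightarrow> (real^'n \<Rightarrow> real^'n \<Rightarrow> real^'p)
   \<Rightarrow> real^'n \<Rightarrow> real^'n \<Rightarrow> real^'p" where
  "Hlo Al bl y yh = Glo Al bl y yh y yh"

definition Hhi :: "(real^'n \<Rightarrow> real^'n \<Rightarrow> real^'n^'p) \<Rightarrow> (real^'n \<Rightarrow> real^'n \<Rightarrow> real^'p)
   \<Rightarrow> real^'n \<Rightarrow> real^'n \<Rightarrow> real^'p" where
  "Hhi Ah bh y yh = Ghi Ah bh y yh y yh"

datatype emb_kind = EmbG | EmbH | EmbL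

definition emb_lo ::
  "(real^'n \<Rightarrow> real^'n \<Rightarrow> real^'p \<Rightarrow> real^'p \<Rightarrow> real^'q \<Rightarrow> real^'q \<Rightarrow> real^'n) \<Rightarrow>
   (real^'n \<Rightarrow> real^'n \<Rightarrow> real^'n^'p) \<Rightarrow> (real^'n \<Rightarrow> real^'n \<Rightarrow> real^'n^'p) \<Rightarrow>
   (real^'n \<Rightarrow> real^'n \<Rightarrow> real^'p) \<Rightarrow> (real^'n \<Rightarrow> real^'n \<Rightarrow> real^'p) \<Rightarrow>
   real^'q \<Rightarrow> real^'q \<Rightarrow> emb_kind \<Rightarrow> real^'n \<Rightarrow> real^'n \<Rightarrow> real^'n" where
  "emb_lo F Al Ah bl bh wl wh s x xh = (case s of
      EmbG \<Rightarrow> (\<chi> i. F x xh (Hlo Al bl x xh) (Hhi Ah bh x xh) wl wh $ i)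
    | EmbH \<Rightarrow> (\<chi> i. F x xh (Glo Al bl x xh x (vupd xh i x)) (Ghi Ah bh x xh x (vupd xh i x)) wl wh $ i)
    | EmbL \<Rightarrow> (\<chi> i. F x xh (Hlo Al bl x (vupd xh i x)) (Hhi Ah bh x (vupd xh i x)) wl wh $ i))"

definition emb_hi ::
  "(real^'n \<Rightarrow> real^'n \<Rightarrow> real^'p \<Rightarrow> real^'p \<Rightarrow> real^'q \<Rightarrow> real^'q \<Rightarrow> real^'n) \<Rightarrow>
   (real^'n \<Rightarrow> real^'n \<Rightarrow> real^'n^'p) \<Rightarrow> (real^'n \<Rightarrow> real^'n \<Rightarrow> real^'n^'p) \<Rightarrow>
   (real^'n \<Rightarrow> real^'n \<Rightarrow> real^'p) \<Rightarrow> (real^'n \<Rightarrow> real^'n \<Rightarrow> real^'p) \<Rightarrow>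
   real^'q \<Rightarrow> real^'q \<Rightarrow> emb_kind \<Rightarrow> real^'n \<Rightarrow> real^'n \<Rightarrow> real^'n" where
  "emb_hi F Al Ah bl bh wl wh s x xh = (case s of
      EmbG \<Rightarrow> (\<chi> i. F xh x (Hhi Ah bh x xh) (Hlo Al bl x xh) wh wl $ i)
    | EmbH \<Rightarrow> (\<chi> i. F xh x (Ghi Ah bh x xh (vupd x i xh) xh) (Glo Al bl x xh (vupd x i xh) xh) wh wl $ i)
    | EmbL \<Rightarrow> (\<chi> i. F xh x (Hhi Ah bh (vupd x i xh) xh) (Hlo Al bl (vupd x i xh) xh) wh wl $ i))"

definition piecewise_cont :: "(real \<Rightarrow> 'a::topological_space) \<Rightarrow> bool" where
  "piecewise_cont w \<longleftrightarrow>
     (\<forall>T\<ge>0. \<exists>S. finite S \<and> continuous_on ({0..T} - S) w \<and>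
        (\<forall>s\<in>S. (\<exists>l. (w \<longlongrightarrow> l) (at_left s)) \<and> (\<exists>l. (w \<longlongrightarrow> l) (at_right s))))"

text \<open>x is a (Caratheodory) trajectory of xdot = f(x, N x, w(t)) on [0,\<infinity>) from x0.\<close>
definition cl_traj :: "(real^'n \<Rightarrow> real^'p \<Rightarrow> real^'q \<Rightarrow> real^'n) \<Rightarrow> (real^'n \<Rightarrow> real^'p) \<Rightarrow>
    (real \<Rightarrow> real^'q) \<Rightarrow> real^'n \<Rightarrow> (real \<Rightarrow> real^'n) \<Rightarrow> bool" where
  "cl_traj f N w x0 x \<longleftrightarrow> x 0 = x0 \<and> continuous_on {0..} x \<and>
     (\<forall>t\<ge>0. ((\<lambda>s. f (x s) (N (x s)) (w s)) has_integral (x t - x0)) {0..t})"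

definition reach_set :: "(real^'n \<Rightarrow> real^'p \<Rightarrow> real^'q \<Rightarrow> real^'n) \<Rightarrow> (real^'n \<Rightarrow> real^'p) \<Rightarrow>
    real \<Rightarrow> (real^'n) set \<Rightarrow> (real^'q) set \<Rightarrow> (real^'n) set" where
  "reach_set f N t X0 W = {x t | x x0 w. x0 \<in> X0 \<and> piecewise_cont w \<and> (\<forall>s\<ge>0. w s \<in> W)
       \<and> cl_traj f N w x0 x}"

end

theory Submission
  imports Defs
begin

text \<open>Fix a closed-loop trajectory xc with disturbance in [wl, wh] and let p be the clamp of
  xc(t) onto the box [xl(t), xh(t)]. When the i-th component of xc(t) lies below the lower face,
  so does that of p; as p lies in the box, the neural-network bounds enclose N p, and monotonicity
  of the decomposition function gives emb_lo(xl, xh)_i \<le> f(p, N p, w)_i. Hence (xl - xc)_i grows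
  at rate at most |f(p, N p, w) - f(xc, N xc, w)| \<le> C |p - xc|, and |p - xc| is at most the total
  amount by which xc leaves the box; the upper faces are symmetric. A Gronwall-type argument then
  shows that the positive parts of xl - xc and xc - xh, zero at time 0, stay zero.\<close>

lemma loc_lipschitz_on_UNIV_imp_lipschitz_on_compact:
  fixes g :: "'a::metric_space \<Rightarrow> 'b::metric_space"
  assumes "loc_lipschitz_on UNIV g" "compact K"
  obtains L where "L-lipschitz_on K g"
proof -
  have "local_lipschitz {0::real} K (\<lambda>_. g)"
  proof (rule local_lipschitzI)
    fix t x assume "x \<in> K"
    obtain e L where e: "e > 0" and L: "\<And>a b. a \<in> ball x e \<Longrightarrow> b \<in> ball x e \<Longrightarrow> dist (g a) (g b) \<le> L * dist a b"
      using assms(1) unfolding loc_lipschitz_on_def by blast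
    have "(max L 0)-lipschitz_on (cball x (e/2) \<inter> K) g"
    proof (rule lipschitz_onI)
      fix a b assume "a \<in> cball x (e/2) \<inter> K" "b \<in> cball x (e/2) \<inter> K"
      then have "dist (g a) (g b) \<le> L * dist a b" using e by (intro L) auto
      also have "\<dots> \<le> max L 0 * dist a b" by (simp add: mult_right_mono)
      finally show "dist (g a) (g b) \<le> max L 0 * dist a b" .
    qed simp
    then show "\<exists>u>0. \<exists>L. \<forall>t\<in>cball t u \<inter> {0}. L-lipschitz_on (cball x u \<inter> K) g"
      using e by (intro exI[of _ "e/2"]) auto
  qed
  from local_lipschitz_compact_implies_lipschitz[OF this assms(2)] that show ?thesis
    by auto
qed

lemma closed_loop_lipschitz_on_compact:
  fixes f :: "'a::metric_space \<Rightarrow> 'b::metric_space \<Rightarrow> 'c::metric_space \<Rightarrow> 'd::metric_space"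
  assumes f_lip: "loc_lipschitz_on UNIV (\<lambda>(x,u,w). f x u w)"
    and N_lip: "loc_lipschitz_on UNIV N"
    and "compact B" "compact W"
  obtains C where "C \<ge> 0"
    "\<And>p z w. p \<in> B \<Longrightarrow> z \<in> B \<Longrightarrow> w \<in> W \<Longrightarrow> dist (f p (N p) w) (f z (N z) w) \<le> C * dist p z"
proof -
  obtain LN where LN: "LN-lipschitz_on B N"
    using loc_lipschitz_on_UNIV_imp_lipschitz_on_compact[OF N_lip \<open>compact B\<close>] .
  have "compact (B \<times> (N ` B \<times> W))"
    using lipschitz_on_continuous_on[OF LN] assms(3,4)
    by (intro compact_Times compact_continuous_image)
  then obtain Lf where Lf: "Lf-lipschitz_on (B \<times> (N ` B \<times> W)) (\<lambda>(x,u,w). f x u w)"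
    using loc_lipschitz_on_UNIV_imp_lipschitz_on_compact[OF f_lip] by blast
  have LN0: "LN \<ge> 0" and Lf0: "Lf \<ge> 0"
    using lipschitz_on_nonneg LN Lf by blast+
  show ?thesis
  proof
    show "Lf * (1 + LN) \<ge> 0" using LN0 Lf0 by simp
  next
    fix p z w assume pzw: "p \<in> B" "z \<in> B" "w \<in> W"
    have "dist (f p (N p) w) (f z (N z) w) \<le> Lf * dist (p, N p, w) (z, N z, w)"
      using lipschitz_onD[OF Lf, of "(p, N p, w)" "(z, N z, w)"] pzw by auto
    also have "dist (p, N p, w) (z, N z, w) \<le> dist p z + dist (N p) (N z)"
      by (simp add: dist_Pair_Pair sqrt_sum_squares_le_sum)
    also have "dist (N p) (N z) \<le> LN * dist p z"
      using lipschitz_onD[OF LN pzw(1,2)] .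
    finally have "dist (f p (N p) w) (f z (N z) w) \<le> Lf * (dist p z + LN * dist p z)"
      using Lf0 by (simp add: mult_left_mono)
    then show "dist (f p (N p) w) (f z (N z) w) \<le> Lf * (1 + LN) * dist p z"
      by (simp add: algebra_simps)
  qed
qed

lemma mat_pos_neg_mult_bounds:
  fixes M :: "real^'n^'m"
  assumes "a \<le> p" "p \<le> b"
  shows "mat_pos M *v a + mat_neg M *v b \<le> M *v p"
    and "M *v p \<le> mat_pos M *v b + mat_neg M *v a"
proof -
  have entry: "max m 0 * a$j + min m 0 * b$j \<le> m * p$j \<and> m * p$j \<le> max m 0 * b$j + min m 0 * a$j"
    for m :: real and j
  proof -
    have "a$j \<le> p$j" "p$j \<le> b$j" using assms by (auto simp: less_eq_vec_def)
    then show ?thesis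
      by (cases "m \<ge> 0") (simp_all add: mult_left_mono mult_left_mono_neg)
  qed
  show "mat_pos M *v a + mat_neg M *v b \<le> M *v p" "M *v p \<le> mat_pos M *v b + mat_neg M *v a"
    unfolding less_eq_vec_def
    using sum_mono[of UNIV "\<lambda>j. max (M$_$j) 0 * a$j + min (M$_$j) 0 * b$j" "\<lambda>j. M$_$j * p$j"]
      sum_mono[of UNIV "\<lambda>j. M$_$j * p$j" "\<lambda>j. max (M$_$j) 0 * b$j + min (M$_$j) 0 * a$j"] entry
    by (auto simp: matrix_vector_mult_def mat_pos_def mat_neg_def sum.distrib)
qed

lemma Glo_le_nn_le_Ghi:
  assumes nn: "nn_bounds N Al Ah bl bh" and "a \<le> p" "p \<le> ah" "y \<le> p" "p \<le> yh"
  shows "Glo Al bl a ah y yh \<le> N p" and "N p \<le> Ghi Ah bh a ah y yh"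
proof -
  have "a \<le> ah" using assms(2,3) by (rule order_trans)
  with assms have "Al a ah *v p + bl a ah \<le> N p" "N p \<le> Ah a ah *v p + bh a ah"
    unfolding nn_bounds_def by auto
  with mat_pos_neg_mult_bounds[OF assms(4,5)]
  show "Glo Al bl a ah y yh \<le> N p" "N p \<le> Ghi Ah bh a ah y yh"
    unfolding Glo_def Ghi_def by (meson add_right_mono order.trans)+
qed

lemma
  assumes "is_decomposition f F"
  shows is_decomposition_diag: "F x x u u w w = f x u w"
    and is_decomposition_mono_state:
      "\<lbrakk>decomp_dom x xh u uh w wh; decomp_dom y yh u uh w wh; x \<le> y; x $ i = y $ i; yh \<le> xh\<rbrakk>
       \<Longrightarrow> F x xh u uh w wh $ i \<le> F y yh u uh w wh $ i"
    and is_decomposition_mono_input: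
      "\<lbrakk>decomp_dom x xh u uh w wh; decomp_dom x xh v vh w wh; u \<le> v; vh \<le> uh\<rbrakk>
       \<Longrightarrow> F x xh u uh w wh $ i \<le> F x xh v vh w wh $ i"
    and is_decomposition_mono_disturbance:
      "\<lbrakk>decomp_dom x xh u uh w wh; decomp_dom x xh u uh om omh; w \<le> om; omh \<le> wh\<rbrakk>
       \<Longrightarrow> F x xh u uh w wh $ i \<le> F x xh u uh om omh $ i"
  using assms unfolding is_decomposition_def by auto

lemma decomposition_le_at_lower_face:
  assumes dec: "is_decomposition f F" and "a \<le> p" "p \<le> b" "p$i = a$i"
    and "ul \<le> u" "u \<le> uh" "wl \<le> w" "w \<le> wh"
  shows "F a b ul uh wl wh $ i \<le> f p u w $ i"
proof -
  have "a \<le> b" "ul \<le> uh" "wl \<le> wh" using assms order_trans by blast+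
  with assms have "F a b ul uh wl wh $ i \<le> F p p ul uh wl wh $ i"
    by (intro is_decomposition_mono_state[OF dec]) (auto simp: decomp_dom_def T2_def)
  also have "\<dots> \<le> F p p u u wl wh $ i"
    using assms \<open>wl \<le> wh\<close>
    by (intro is_decomposition_mono_input[OF dec]) (auto simp: decomp_dom_def T2_def)
  also have "\<dots> \<le> F p p u u w w $ i"
    using assms by (intro is_decomposition_mono_disturbance[OF dec]) (auto simp: decomp_dom_def T2_def)
  finally show ?thesis by (simp add: is_decomposition_diag[OF dec])
qed

lemma decomposition_ge_at_upper_face:
  assumes dec: "is_decomposition f F" and "a \<le> p" "p \<le> b" "p$i = b$i"
    and "ul \<le> u" "u \<le> uh" "wl \<le> w" "w \<le> wh"
  shows "f p u w $ i \<le> F b a uh ul wh wl $ i"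
proof -
  have "a \<le> b" "ul \<le> uh" "wl \<le> wh" using assms order_trans by blast+
  have "f p u w $ i = F p p u u w w $ i" by (simp add: is_decomposition_diag[OF dec])
  also have "\<dots> \<le> F p p u u wh wl $ i"
    using assms by (intro is_decomposition_mono_disturbance[OF dec]) (auto simp: decomp_dom_def T2_def)
  also have "\<dots> \<le> F p p uh ul wh wl $ i"
    using assms \<open>wl \<le> wh\<close>
    by (intro is_decomposition_mono_input[OF dec]) (auto simp: decomp_dom_def T2_def)
  also have "\<dots> \<le> F b a uh ul wh wl $ i"
    using assms \<open>a \<le> b\<close> \<open>ul \<le> uh\<close> \<open>wl \<le> wh\<close>
    by (intro is_decomposition_mono_state[OF dec]) (auto simp: decomp_dom_def T2_def)
  finally show ?thesis .
qed

lemma vupd_bounds_at_face: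
  assumes "a \<le> p" "p \<le> b"
  shows "p$i = a$i \<Longrightarrow> p \<le> vupd b i a" and "p$i = b$i \<Longrightarrow> vupd a i b \<le> p"
  using assms by (auto simp: less_eq_vec_def vupd_def)

lemma emb_lo_le_at_lower_face:
  assumes dec: "is_decomposition f F" and nn: "nn_bounds N Al Ah bl bh"
    and p: "a \<le> p" "p \<le> b" "p$i = a$i" and w: "wl \<le> w" "w \<le> wh"
  shows "emb_lo F Al Ah bl bh wl wh s a b $ i \<le> f p (N p) w $ i"
proof -
  note lower = decomposition_le_at_lower_face[OF dec p _ _ w]
  have p_upd: "p \<le> vupd b i a" using vupd_bounds_at_face(1)[OF p(1,2,3)] .
  show ?thesis
  proof (cases s)
    case EmbG
    then show ?thesis unfolding emb_lo_def Hlo_def Hhi_def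
      using lower[OF Glo_le_nn_le_Ghi[OF nn p(1,2) p(1,2)]] by simp
  next
    case EmbH
    then show ?thesis unfolding emb_lo_def
      using lower[OF Glo_le_nn_le_Ghi[OF nn p(1,2) p(1) p_upd]] by simp
  next
    case EmbL
    then show ?thesis unfolding emb_lo_def Hlo_def Hhi_def
      using lower[OF Glo_le_nn_le_Ghi[OF nn p(1) p_upd p(1) p_upd]] by simp
  qed
qed

lemma emb_hi_ge_at_upper_face:
  assumes dec: "is_decomposition f F" and nn: "nn_bounds N Al Ah bl bh"
    and p: "a \<le> p" "p \<le> b" "p$i = b$i" and w: "wl \<le> w" "w \<le> wh"
  shows "f p (N p) w $ i \<le> emb_hi F Al Ah bl bh wl wh s a b $ i"
proof -
  note upper = decomposition_ge_at_upper_face[OF dec p _ _ w]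
  have p_upd: "vupd a i b \<le> p" using vupd_bounds_at_face(2)[OF p(1,2,3)] .
  show ?thesis
  proof (cases s)
    case EmbG
    then show ?thesis unfolding emb_hi_def Hlo_def Hhi_def
      using upper[OF Glo_le_nn_le_Ghi[OF nn p(1,2) p(1,2)]] by simp
  next
    case EmbH
    then show ?thesis unfolding emb_hi_def
      using upper[OF Glo_le_nn_le_Ghi[OF nn p(1,2) p_upd p(2)]] by simp
  next
    case EmbL
    then show ?thesis unfolding emb_hi_def Hlo_def Hhi_def
      using upper[OF Glo_le_nn_le_Ghi[OF nn p_upd p(2) p_upd p(2)]] by simp
  qed
qed

definition clamp :: "real^'n \<Rightarrow> real^'n \<Rightarrow> real^'n \<Rightarrow> real^'n" where
  "clamp a b z = (\<chi> j. min (b$j) (max (a$j) (z$j)))"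

definition box_excess :: "real^'n \<Rightarrow> real^'n \<Rightarrow> real^'n \<Rightarrow> real" where
  "box_excess a b z = (\<Sum>j\<in>UNIV. max 0 (a$j - z$j) + max 0 (z$j - b$j))"

lemma
  fixes a b z :: "real^'n"
  assumes "a \<le> b"
  shows clamp_in_box: "a \<le> clamp a b z" "clamp a b z \<le> b"
    and clamp_nth_lower: "z$i \<le> a$i \<Longrightarrow> clamp a b z $ i = a$i"
    and clamp_nth_upper: "b$i \<le> z$i \<Longrightarrow> clamp a b z $ i = b$i"
    and dist_clamp_le: "dist (clamp a b z) z \<le> box_excess a b z"
proof -
  have ab: "a$j \<le> b$j" for j using assms by (simp add: less_eq_vec_def)
  show "a \<le> clamp a b z" "clamp a b z \<le> b"
    using ab by (auto simp: less_eq_vec_def clamp_def)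
  show "z$i \<le> a$i \<Longrightarrow> clamp a b z $ i = a$i" "b$i \<le> z$i \<Longrightarrow> clamp a b z $ i = b$i"
    using ab[of i] by (auto simp: clamp_def)
  have "dist (clamp a b z) z \<le> (\<Sum>j\<in>UNIV. \<bar>(clamp a b z - z)$j\<bar>)"
    unfolding dist_norm by (rule norm_le_l1_cart)
  also have "\<dots> = box_excess a b z"
    unfolding box_excess_def clamp_def
  proof (rule sum.cong)
    show "\<bar>((\<chi> j. min (b$j) (max (a$j) (z$j))) - z)$j\<bar> = max 0 (a$j - z$j) + max 0 (z$j - b$j)"
      for j using ab[of j] by (simp add: max_def min_def)
  qed simp
  finally show "dist (clamp a b z) z \<le> box_excess a b z" .
qed

lemma
  fixes f :: "real^'n \<Rightarrow> real^'p \<Rightarrow> real^'q \<Rightarrow> real^'n"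
  assumes dec: "is_decomposition f F" and nn: "nn_bounds N Al Ah bl bh"
    and "a \<le> b" and w: "wl \<le> w" "w \<le> wh" and "C \<ge> 0"
    and lip: "dist (f (clamp a b z) (N (clamp a b z)) w) (f z (N z) w) \<le> C * dist (clamp a b z) z"
  shows emb_lo_defect_le: "z$i \<le> a$i \<Longrightarrow>
      emb_lo F Al Ah bl bh wl wh s a b $ i - f z (N z) w $ i \<le> C * box_excess a b z"
    and emb_hi_defect_le: "b$i \<le> z$i \<Longrightarrow>
      f z (N z) w $ i - emb_hi F Al Ah bl bh wl wh s a b $ i \<le> C * box_excess a b z"
proof -
  define p where "p = clamp a b z"
  have p: "a \<le> p" "p \<le> b" unfolding p_def using clamp_in_box[OF \<open>a \<le> b\<close>] .
  have "\<bar>(f p (N p) w - f z (N z) w) $ i\<bar> \<le> dist (f p (N p) w) (f z (N z) w)"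
    unfolding dist_norm by (rule component_le_norm_cart)
  also have "\<dots> \<le> C * dist p z" using lip unfolding p_def .
  also have "\<dots> \<le> C * box_excess a b z"
    unfolding p_def using dist_clamp_le[OF \<open>a \<le> b\<close>] \<open>C \<ge> 0\<close> by (rule mult_left_mono)
  finally have defect: "\<bar>f p (N p) w $ i - f z (N z) w $ i\<bar> \<le> C * box_excess a b z" by simp
  show "emb_lo F Al Ah bl bh wl wh s a b $ i - f z (N z) w $ i \<le> C * box_excess a b z"
    if "z$i \<le> a$i"
    using emb_lo_le_at_lower_face[OF dec nn p _ w, of i s] clamp_nth_lower[OF \<open>a \<le> b\<close> that]
      defect unfolding p_def by linarith
  show "f z (N z) w $ i - emb_hi F Al Ah bl bh wl wh s a b $ i \<le> C * box_excess a b z"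
    if "b$i \<le> z$i"
    using emb_hi_ge_at_upper_face[OF dec nn p _ w, of i s] clamp_nth_upper[OF \<open>a \<le> b\<close> that]
      defect unfolding p_def by linarith
qed

lemma last_zero_before:
  fixes e :: "real \<Rightarrow> real"
  assumes cont: "continuous_on {a..t} e" and "a \<le> t" "e a \<le> 0" "e t > 0"
  obtains \<tau> where "a \<le> \<tau>" "\<tau> \<le> t" "e \<tau> = 0" "\<And>s. \<tau> \<le> s \<Longrightarrow> s \<le> t \<Longrightarrow> e s \<ge> 0"
proof -
  define Z where "Z = {s\<in>{a..t}. e s = 0}"
  have "Z \<noteq> {}"
    using IVT'[of e a 0 t] assms unfolding Z_def by fastforce
  moreover have "bdd_above Z" "closed Z"
    unfolding Z_def using continuous_closed_preimage_constant[OF cont] by auto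
  ultimately have "Sup Z \<in> Z" by (rule closed_contains_Sup)
  then have \<tau>: "a \<le> Sup Z" "Sup Z \<le> t" "e (Sup Z) = 0" unfolding Z_def by auto
  have "e s \<ge> 0" if s: "Sup Z \<le> s" "s \<le> t" for s
  proof (rule ccontr)
    assume "\<not> e s \<ge> 0"
    then obtain r where r: "s \<le> r" "r \<le> t" "e r = 0"
      using IVT'[of e s 0 t] s \<open>e t > 0\<close> continuous_on_subset[OF cont, of "{s..t}"] \<tau>(1) by auto
    then have "r \<in> Z" unfolding Z_def using \<tau>(1) s by auto
    then have "r \<le> Sup Z" using \<open>bdd_above Z\<close> by (rule cSup_upper)
    with r s have "r = s" by linarith
    with r \<open>\<not> e s \<ge> 0\<close> show False by simp
  qed
  with \<tau> that show ?thesis by blast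
qed

lemma positive_part_growth_le:
  fixes e g :: "real \<Rightarrow> real"
  assumes cont: "continuous_on {t0..t} e" and "t0 \<le> t" "e t0 \<le> 0" "K \<ge> 0"
    and integ: "\<And>a. t0 \<le> a \<Longrightarrow> a \<le> t \<Longrightarrow> (g has_integral (e t - e a)) {a..t}"
    and bound: "\<And>s. t0 \<le> s \<Longrightarrow> s \<le> t \<Longrightarrow> e s \<ge> 0 \<Longrightarrow> g s \<le> K"
  shows "max 0 (e t) \<le> K * (t - t0)"
proof (cases "e t \<le> 0")
  case True
  then show ?thesis using \<open>K \<ge> 0\<close> \<open>t0 \<le> t\<close> by simp
next
  case False
  then obtain \<tau> where \<tau>: "t0 \<le> \<tau>" "\<tau> \<le> t" "e \<tau> = 0"
    and nonneg: "\<And>s. \<tau> \<le> s \<Longrightarrow> s \<le> t \<Longrightarrow> e s \<ge> 0"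
    using last_zero_before[OF cont \<open>t0 \<le> t\<close> \<open>e t0 \<le> 0\<close>] by (metis not_le)
  have "e t - e \<tau> \<le> K * (t - \<tau>)"
  proof (rule has_integral_le)
    show "(g has_integral (e t - e \<tau>)) {\<tau>..t}" using \<tau>(1,2) by (rule integ)
    show "((\<lambda>_. K) has_integral K * (t - \<tau>)) {\<tau>..t}"
      using has_integral_const_real[of K \<tau> t] \<tau> by (simp add: mult.commute)
    show "g s \<le> K" if "s \<in> {\<tau>..t}" for s
      using that \<tau> nonneg by (intro bound) auto
  qed
  also have "\<dots> \<le> K * (t - t0)" using \<tau> \<open>K \<ge> 0\<close> by (intro mult_left_mono) auto
  finally show ?thesis using \<tau> False by simp
qed

text \<open>On an interval of length \<delta> after a time where all E k are nonpositive, each positive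
  part grows since its last zero at rate at most C M, where M is the maximum of the total positive
  part on the interval; summing over the CARD('k) indices gives M \<le> CARD('k) C \<delta> M \<le> M / 2.\<close>

lemma positive_parts_vanish_on_short_interval:
  fixes E G :: "'k::finite \<Rightarrow> real \<Rightarrow> real"
  assumes cont: "\<And>k. continuous_on {0..T} (E k)"
    and integ: "\<And>k a b. 0 \<le> a \<Longrightarrow> a \<le> b \<Longrightarrow> b \<le> T \<Longrightarrow> (G k has_integral (E k b - E k a)) {a..b}"
    and bound: "\<And>k s. 0 \<le> s \<Longrightarrow> s \<le> T \<Longrightarrow> E k s \<ge> 0 \<Longrightarrow> G k s \<le> C * (\<Sum>k'\<in>UNIV. max 0 (E k' s))"
    and "C \<ge> 0" and "\<delta> > 0" and \<delta>_small: "real CARD('k) * C * \<delta> \<le> 1/2"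
    and t0: "0 \<le> t0" "t0 \<le> T" and E_t0: "\<And>k. E k t0 \<le> 0"
  shows "\<And>k t. t0 \<le> t \<Longrightarrow> t \<le> T \<Longrightarrow> t \<le> t0 + \<delta> \<Longrightarrow> E k t \<le> 0"
proof -
  define D where "D s = (\<Sum>k\<in>UNIV. max 0 (E k s))" for s
  define t1 where "t1 = min T (t0 + \<delta>)"
  have t1: "t0 \<le> t1" "t1 \<le> T" "t1 \<le> t0 + \<delta>" using t0 \<open>\<delta> > 0\<close> unfolding t1_def by auto
  have "continuous_on {t0..t1} D"
    unfolding D_def using t0 t1 by (intro continuous_intros continuous_on_subset[OF cont]) auto
  then obtain ts where ts: "ts \<in> {t0..t1}" and max: "\<And>s. s \<in> {t0..t1} \<Longrightarrow> D s \<le> D ts"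
    using continuous_attains_sup[of "{t0..t1}" D] t1 by auto
  define M where "M = D ts"
  have "M \<ge> 0" unfolding M_def D_def by (auto intro: sum_nonneg)
  have pos_part: "max 0 (E k t) \<le> C * M * \<delta>" if t: "t \<in> {t0..t1}" for k t
  proof -
    have "max 0 (E k t) \<le> (C * M) * (t - t0)"
    proof (rule positive_part_growth_le)
      show "continuous_on {t0..t} (E k)"
        using t t0 t1 by (intro continuous_on_subset[OF cont]) auto
      show "(G k has_integral (E k t - E k a)) {a..t}" if "t0 \<le> a" "a \<le> t" for a
        using that t t0 t1 by (intro integ) auto
      show "G k s \<le> C * M" if "t0 \<le> s" "s \<le> t" "E k s \<ge> 0" for s
      proof -
        have "s \<in> {t0..t1}" using that t by auto
        then have "G k s \<le> C * D s" unfolding D_def using bound that t0 t1 by auto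
        also have "\<dots> \<le> C * M" unfolding M_def using max \<open>s \<in> {t0..t1}\<close> \<open>C \<ge> 0\<close> by (simp add: mult_left_mono)
        finally show ?thesis .
      qed
    qed (use t E_t0 \<open>C \<ge> 0\<close> \<open>M \<ge> 0\<close> in auto)
    also have "\<dots> \<le> C * M * \<delta>"
      using t t1 \<open>C \<ge> 0\<close> \<open>M \<ge> 0\<close> by (intro mult_left_mono) auto
    finally show ?thesis .
  qed
  have "M = (\<Sum>k\<in>UNIV. max 0 (E k ts))" by (simp add: M_def D_def)
  also have "\<dots> \<le> (\<Sum>k\<in>(UNIV::'k set). C * M * \<delta>)"
    by (rule sum_mono) (rule pos_part[OF ts])
  also have "\<dots> = real CARD('k) * C * \<delta> * M" by simp
  also have "\<dots> \<le> 1/2 * M" using \<delta>_small \<open>M \<ge> 0\<close> by (rule mult_right_mono)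
  finally have "M \<le> 0" by simp
  then show "E k t \<le> 0" if "t0 \<le> t" "t \<le> T" "t \<le> t0 + \<delta>" for k t
    using pos_part[of t k] \<open>C \<ge> 0\<close> \<open>\<delta> > 0\<close> \<open>M \<ge> 0\<close> that unfolding t1_def by auto
qed

lemma positive_parts_stay_zero:
  fixes E G :: "'k::finite \<Rightarrow> real \<Rightarrow> real"
  assumes cont: "\<And>k. continuous_on {0..T} (E k)"
    and integ: "\<And>k a b. 0 \<le> a \<Longrightarrow> a \<le> b \<Longrightarrow> b \<le> T \<Longrightarrow> (G k has_integral (E k b - E k a)) {a..b}"
    and bound: "\<And>k s. 0 \<le> s \<Longrightarrow> s \<le> T \<Longrightarrow> E k s \<ge> 0 \<Longrightarrow> G k s \<le> C * (\<Sum>k'\<in>UNIV. max 0 (E k' s))"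
    and "C \<ge> 0" and E_0: "\<And>k. E k 0 \<le> 0"
    and "0 \<le> t" "t \<le> T"
  shows "E k t \<le> 0"
proof -
  define \<delta> where "\<delta> = 1 / (2 * (real CARD('k) * C + 1))"
  have "0 \<le> real CARD('k) * C" using \<open>C \<ge> 0\<close> by simp
  then have "\<delta> > 0" and \<delta>_small: "real CARD('k) * C * \<delta> \<le> 1/2"
    unfolding \<delta>_def by (simp_all add: divide_le_eq)
  have "\<forall>k t. 0 \<le> t \<and> t \<le> T \<and> t \<le> real m * \<delta> \<longrightarrow> E k t \<le> 0" for m :: nat
  proof (induction m)
    case 0
    then show ?case using E_0 by (metis antisym mult_zero_left of_nat_0)
  next
    case (Suc m)
    show ?case
    proof (intro allI impI)
      fix k t assume t: "0 \<le> t \<and> t \<le> T \<and> t \<le> real (Suc m) * \<delta>"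
      show "E k t \<le> 0"
      proof (cases "t \<le> real m * \<delta>")
        case True
        then show ?thesis using Suc.IH t by blast
      next
        case False
        then have m\<delta>: "0 \<le> real m * \<delta>" "real m * \<delta> \<le> T" "t \<le> real m * \<delta> + \<delta>"
          using t \<open>\<delta> > 0\<close> by (auto simp: algebra_simps)
        with Suc.IH have "E k' (real m * \<delta>) \<le> 0" for k' by blast
        with m\<delta> False t show ?thesis
          using positive_parts_vanish_on_short_interval[of T E G C \<delta> "real m * \<delta>" t k]
            cont integ bound \<open>C \<ge> 0\<close> \<open>\<delta> > 0\<close> \<delta>_small by auto
      qed
    qed
  qed
  moreover obtain m :: nat where "T / \<delta> \<le> real m" using real_arch_simple by blast
  then have "T \<le> real m * \<delta>" using \<open>\<delta> > 0\<close> by (simp add: field_simps)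
  ultimately show ?thesis using \<open>0 \<le> t\<close> \<open>t \<le> T\<close> by (meson order.trans)
qed

lemma has_integral_increment_of_cumulative:
  fixes \<phi> x :: "real \<Rightarrow> 'a::banach"
  assumes cum: "\<And>t. 0 \<le> t \<Longrightarrow> (\<phi> has_integral (x t - x 0)) {0..t}" and "0 \<le> a" "a \<le> b"
  shows "(\<phi> has_integral (x b - x a)) {a..b}"
proof -
  have "\<phi> integrable_on {a..b}"
    using integrable_subinterval_real[OF has_integral_integrable[OF cum[of b]]] assms by auto
  then have I: "(\<phi> has_integral integral {a..b} \<phi>) {a..b}" by (rule integrable_integral)
  have "(\<phi> has_integral (x a - x 0) + integral {a..b} \<phi>) {0..b}"
    using has_integral_combine[OF _ _ cum[of a] I] assms by simp
  moreover have "(\<phi> has_integral (x b - x 0)) {0..b}" using cum assms by simp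
  ultimately have "(x a - x 0) + integral {a..b} \<phi> = x b - x 0" by (rule has_integral_unique)
  then have "integral {a..b} \<phi> = x b - x a" by (simp add: algebra_simps)
  with I show ?thesis by simp
qed

lemma has_integral_nth:
  "(h has_integral v) S \<Longrightarrow> ((\<lambda>s. h s $ i) has_integral v $ i) S"
  using has_integral_linear[OF _ bounded_linear_vec_nth] by (auto simp: o_def)

lemma compact_superset_of_tube:
  fixes xl xh xc :: "real \<Rightarrow> real^'n"
  assumes "continuous_on {0..T} xl" "continuous_on {0..T} xh" "continuous_on {0..T} xc"
  obtains B where "compact B" "\<And>s p. s \<in> {0..T} \<Longrightarrow> xl s \<le> p \<Longrightarrow> p \<le> xh s \<Longrightarrow> p \<in> B"
    "\<And>s. s \<in> {0..T} \<Longrightarrow> xc s \<in> B"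
proof -
  have "compact (xl ` {0..T} \<union> xh ` {0..T} \<union> xc ` {0..T})"
    using assms by (intro compact_Un compact_continuous_image compact_Icc)
  then obtain a where a: "xl ` {0..T} \<union> xh ` {0..T} \<union> xc ` {0..T} \<subseteq> {-a..a}"
    unfolding interval_cbox_cart by (rule bounded_subset_cbox_symmetric[OF compact_imp_bounded])
  show ?thesis
  proof (rule that[of "{-a..a}"])
    show "compact {-a..a}" by (simp add: interval_cbox_cart)
    show "p \<in> {-a..a}" if "s \<in> {0..T}" "xl s \<le> p" "p \<le> xh s" for s p
    proof -
      have "xl s \<in> {-a..a}" "xh s \<in> {-a..a}" using a that(1) by blast+
      then have "-a \<le> xl s" "xh s \<le> a" by simp_all
      with that(2,3) show ?thesis by (meson atLeastAtMost_iff order.trans)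
    qed
    show "xc s \<in> {-a..a}" if "s \<in> {0..T}" for s
      using a that by blast
  qed
qed

lemma sum_UNIV_bool_prod:
  fixes h :: "bool \<times> 'n::finite \<Rightarrow> real"
  shows "(\<Sum>k\<in>UNIV. h k) = (\<Sum>j\<in>UNIV. h (True, j) + h (False, j))"
proof -
  have "(\<Sum>k\<in>UNIV. h k) = (\<Sum>k\<in>(UNIV::bool set) \<times> (UNIV::'n set). h k)"
    by (simp add: UNIV_Times_UNIV)
  also have "\<dots> = (\<Sum>b\<in>UNIV. \<Sum>j\<in>UNIV. h (b, j))"
    by (simp add: sum.cartesian_product)
  also have "\<dots> = (\<Sum>j\<in>UNIV. h (True, j)) + (\<Sum>j\<in>UNIV. h (False, j))"
    by (simp add: UNIV_bool)
  finally show ?thesis by (simp add: sum.distrib)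
qed

lemma enclosure_by_face_comparison:
  fixes xl xh xc glo ghi \<phi> :: "real \<Rightarrow> real^'n"
  assumes cont: "continuous_on {0..T} xl" "continuous_on {0..T} xh" "continuous_on {0..T} xc"
    and integrals: "\<And>a b. 0 \<le> a \<Longrightarrow> a \<le> b \<Longrightarrow> b \<le> T \<Longrightarrow> (glo has_integral (xl b - xl a)) {a..b}"
      "\<And>a b. 0 \<le> a \<Longrightarrow> a \<le> b \<Longrightarrow> b \<le> T \<Longrightarrow> (ghi has_integral (xh b - xh a)) {a..b}"
      "\<And>a b. 0 \<le> a \<Longrightarrow> a \<le> b \<Longrightarrow> b \<le> T \<Longrightarrow> (\<phi> has_integral (xc b - xc a)) {a..b}"
    and lower_face: "\<And>t i. 0 \<le> t \<Longrightarrow> t \<le> T \<Longrightarrow> xc t $ i \<le> xl t $ i \<Longrightarrow>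
      glo t $ i - \<phi> t $ i \<le> C * box_excess (xl t) (xh t) (xc t)"
    and upper_face: "\<And>t i. 0 \<le> t \<Longrightarrow> t \<le> T \<Longrightarrow> xh t $ i \<le> xc t $ i \<Longrightarrow>
      \<phi> t $ i - ghi t $ i \<le> C * box_excess (xl t) (xh t) (xc t)"
    and "C \<ge> 0" and init: "xl 0 \<le> xc 0" "xc 0 \<le> xh 0" and "0 \<le> T"
  shows "xl T \<le> xc T \<and> xc T \<le> xh T"
proof -
  define E where "E k t = (if fst k then (xl t - xc t) $ snd k else (xc t - xh t) $ snd k)"
    for k :: "bool \<times> 'n" and t
  define G where "G k t = (if fst k then (glo t - \<phi> t) $ snd k else (\<phi> t - ghi t) $ snd k)"
    for k :: "bool \<times> 'n" and t
  have E_cont: "continuous_on {0..T} (E k)" for k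
    unfolding E_def using cont by (cases "fst k") (auto intro!: continuous_intros)
  have E_integral: "(G k has_integral (E k b - E k a)) {a..b}" if "0 \<le> a" "a \<le> b" "b \<le> T" for k a b
  proof (cases "fst k")
    case True
    have "((\<lambda>t. (glo t - \<phi> t) $ snd k) has_integral ((xl b - xl a) - (xc b - xc a)) $ snd k) {a..b}"
      using that by (intro has_integral_nth has_integral_diff integrals)
    with True show ?thesis unfolding G_def E_def by (simp add: algebra_simps)
  next
    case False
    have "((\<lambda>t. (\<phi> t - ghi t) $ snd k) has_integral ((xc b - xc a) - (xh b - xh a)) $ snd k) {a..b}"
      using that by (intro has_integral_nth has_integral_diff integrals)
    with False show ?thesis unfolding G_def E_def by (simp add: algebra_simps)
  qed
  have G_bound: "G k t \<le> C * (\<Sum>k'\<in>UNIV. max 0 (E k' t))" if "0 \<le> t" "t \<le> T" "E k t \<ge> 0" for k t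
  proof -
    have "(\<Sum>k'\<in>UNIV. max 0 (E k' t)) = box_excess (xl t) (xh t) (xc t)"
      unfolding sum_UNIV_bool_prod box_excess_def E_def by simp
    with that show ?thesis
      using lower_face[of t "snd k"] upper_face[of t "snd k"] unfolding G_def E_def
      by (cases "fst k") auto
  qed
  have E_0: "E k 0 \<le> 0" for k
    using init unfolding E_def by (auto simp: less_eq_vec_def)
  have E_T: "E k T \<le> 0" for k
    by (rule positive_parts_stay_zero[where E = E and G = G and T = T and C = C])
      (assumption | rule E_cont E_integral G_bound E_0 \<open>C \<ge> 0\<close> \<open>0 \<le> T\<close> order_refl)+
  have "xl T $ i \<le> xc T $ i" "xc T $ i \<le> xh T $ i" for i
    using E_T[of "(True, i)"] E_T[of "(False, i)"] unfolding E_def by simp_all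
  then show ?thesis by (simp add: less_eq_vec_def)
qed

lemma closed_loop_trajectory_enclosed:
  fixes f :: "real^'n \<Rightarrow> real^'p \<Rightarrow> real^'q \<Rightarrow> real^'n"
    and F :: "real^'n \<Rightarrow> real^'n \<Rightarrow> real^'p \<Rightarrow> real^'p \<Rightarrow> real^'q \<Rightarrow> real^'q \<Rightarrow> real^'n"
    and xl xh xc :: "real \<Rightarrow> real^'n" and w :: "real \<Rightarrow> real^'q"
  assumes f_lip: "loc_lipschitz_on UNIV (\<lambda>(x,u,w). f x u w)"
    and N_lip: "loc_lipschitz_on UNIV N"
    and dec: "is_decomposition f F"
    and nn: "nn_bounds N Al Ah bl bh"
    and ode_lo: "\<forall>t\<ge>0. (xl has_vector_derivative emb_lo F Al Ah bl bh wl wh s (xl t) (xh t)) (at t within {0..})"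
    and ode_hi: "\<forall>t\<ge>0. (xh has_vector_derivative emb_hi F Al Ah bl bh wl wh s (xl t) (xh t)) (at t within {0..})"
    and ordered: "\<forall>t\<ge>0. xl t \<le> xh t"
    and xc_cont: "continuous_on {0..} xc"
    and xc_integral: "\<And>t. 0 \<le> t \<Longrightarrow> ((\<lambda>s. f (xc s) (N (xc s)) (w s)) has_integral (xc t - xc 0)) {0..t}"
    and w: "\<And>s. 0 \<le> s \<Longrightarrow> wl \<le> w s" "\<And>s. 0 \<le> s \<Longrightarrow> w s \<le> wh"
    and init: "xl 0 \<le> xc 0" "xc 0 \<le> xh 0"
    and "0 \<le> T"
  shows "xl T \<le> xc T \<and> xc T \<le> xh T"
proof -
  define glo where "glo t = emb_lo F Al Ah bl bh wl wh s (xl t) (xh t)" for t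
  define ghi where "ghi t = emb_hi F Al Ah bl bh wl wh s (xl t) (xh t)" for t
  have "continuous_on {0..} xl"
    by (rule continuous_on_vector_derivative[where f'="glo"]) (use ode_lo in \<open>auto simp: glo_def\<close>)
  moreover have "continuous_on {0..} xh"
    by (rule continuous_on_vector_derivative[where f'="ghi"]) (use ode_hi in \<open>auto simp: ghi_def\<close>)
  ultimately have cont: "continuous_on {0..T} xl" "continuous_on {0..T} xh" "continuous_on {0..T} xc"
    using xc_cont by (auto intro: continuous_on_subset)
  have glo_integral: "(glo has_integral (xl b - xl a)) {a..b}" if "0 \<le> a" "a \<le> b" for a b
    unfolding glo_def
    by (rule fundamental_theorem_of_calculus[OF that(2)])
      (rule has_vector_derivative_within_subset[of _ _ _ "{0..}"], use ode_lo that in auto)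
  have ghi_integral: "(ghi has_integral (xh b - xh a)) {a..b}" if "0 \<le> a" "a \<le> b" for a b
    unfolding ghi_def
    by (rule fundamental_theorem_of_calculus[OF that(2)])
      (rule has_vector_derivative_within_subset[of _ _ _ "{0..}"], use ode_hi that in auto)
  obtain B where "compact B" and tube: "\<And>t p. t \<in> {0..T} \<Longrightarrow> xl t \<le> p \<Longrightarrow> p \<le> xh t \<Longrightarrow> p \<in> B"
    and xc_B: "\<And>t. t \<in> {0..T} \<Longrightarrow> xc t \<in> B"
    using compact_superset_of_tube[OF cont] by blast
  obtain C where "C \<ge> 0"
    and lip: "\<And>p z v. p \<in> B \<Longrightarrow> z \<in> B \<Longrightarrow> v \<in> {wl..wh} \<Longrightarrow> dist (f p (N p) v) (f z (N z) v) \<le> C * dist p z"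
    using closed_loop_lipschitz_on_compact[OF f_lip N_lip \<open>compact B\<close>, of "{wl..wh}"]
    by (auto simp: interval_cbox_cart)
  have defect:
    "\<And>i. xc t $ i \<le> xl t $ i \<Longrightarrow> glo t $ i - f (xc t) (N (xc t)) (w t) $ i \<le> C * box_excess (xl t) (xh t) (xc t)"
    "\<And>i. xh t $ i \<le> xc t $ i \<Longrightarrow> f (xc t) (N (xc t)) (w t) $ i - ghi t $ i \<le> C * box_excess (xl t) (xh t) (xc t)"
    if t: "0 \<le> t" "t \<le> T" for t
  proof -
    have box: "xl t \<le> xh t" using ordered t by auto
    have "dist (f (clamp (xl t) (xh t) (xc t)) (N (clamp (xl t) (xh t) (xc t))) (w t)) (f (xc t) (N (xc t)) (w t))
        \<le> C * dist (clamp (xl t) (xh t) (xc t)) (xc t)"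
      using t w clamp_in_box[OF box] by (intro lip tube xc_B) auto
    then show "\<And>i. xc t $ i \<le> xl t $ i \<Longrightarrow> glo t $ i - f (xc t) (N (xc t)) (w t) $ i \<le> C * box_excess (xl t) (xh t) (xc t)"
      "\<And>i. xh t $ i \<le> xc t $ i \<Longrightarrow> f (xc t) (N (xc t)) (w t) $ i - ghi t $ i \<le> C * box_excess (xl t) (xh t) (xc t)"
      unfolding glo_def ghi_def
      using emb_lo_defect_le[OF dec nn box w[OF t(1)] \<open>C \<ge> 0\<close>]
        emb_hi_defect_le[OF dec nn box w[OF t(1)] \<open>C \<ge> 0\<close>] by blast+
  qed
  show ?thesis
    using enclosure_by_face_comparison[OF cont glo_integral ghi_integral
        has_integral_increment_of_cumulative[OF xc_integral] defect \<open>C \<ge> 0\<close> init \<open>0 \<le> T\<close>]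
    by simp
qed

theorem theorem2:
  fixes f :: "real^'n \<Rightarrow> real^'p \<Rightarrow> real^'q \<Rightarrow> real^'n"
    and N :: "real^'n \<Rightarrow> real^'p"
    and F :: "real^'n \<Rightarrow> real^'n \<Rightarrow> real^'p \<Rightarrow> real^'p \<Rightarrow> real^'q \<Rightarrow> real^'q \<Rightarrow> real^'n"
    and Al Ah :: "real^'n \<Rightarrow> real^'n \<Rightarrow> real^'n^'p"
    and bl bh :: "real^'n \<Rightarrow> real^'n \<Rightarrow> real^'p"
    and X0 :: "(real^'n) set" and W :: "(real^'q) set"
    and x0l x0h :: "real^'n" and wl wh :: "real^'q"
    and s :: emb_kind
    and xl xh :: "real \<Rightarrow> real^'n"
  assumes f_lip: "loc_lipschitz_on UNIV (\<lambda>(x,u,w). f x u w)"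
    and N_lip: "loc_lipschitz_on UNIV N"
    and X0: "X0 \<subseteq> {x0l..x0h}"
    and W: "W \<subseteq> {wl..wh}"
    and decomp: "is_decomposition f F"
    and nn: "nn_bounds N Al Ah bl bh"
    and init: "xl 0 = x0l" "xh 0 = x0h"
    and ode_lo: "\<forall>t\<ge>0. (xl has_vector_derivative emb_lo F Al Ah bl bh wl wh s (xl t) (xh t)) (at t within {0..})"
    and ode_hi: "\<forall>t\<ge>0. (xh has_vector_derivative emb_hi F Al Ah bl bh wl wh s (xl t) (xh t)) (at t within {0..})"
    and ordered: "\<forall>t\<ge>0. xl t \<le> xh t"
  shows "\<forall>t\<ge>0. reach_set f N t X0 W \<subseteq> {xl t..xh t}"
proof (intro allI impI subsetI)
  fix t y assume "t \<ge> 0" and "y \<in> reach_set f N t X0 W"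
  then obtain xc x0 w where y: "y = xc t" and "x0 \<in> X0" and w_W: "\<forall>s\<ge>0. w s \<in> W"
    and traj: "cl_traj f N w x0 xc"
    unfolding reach_set_def by blast
  then have init_le: "xl 0 \<le> xc 0" "xc 0 \<le> xh 0" and xc_cont: "continuous_on {0..} xc"
    and xc_integral: "\<And>t. 0 \<le> t \<Longrightarrow> ((\<lambda>s. f (xc s) (N (xc s)) (w s)) has_integral (xc t - xc 0)) {0..t}"
    using X0 init unfolding cl_traj_def by auto
  have w_lo: "\<And>s. 0 \<le> s \<Longrightarrow> wl \<le> w s" and w_hi: "\<And>s. 0 \<le> s \<Longrightarrow> w s \<le> wh"
    using w_W W by auto
  show "y \<in> {xl t..xh t}"
    using closed_loop_trajectory_enclosed[OF f_lip N_lip decomp nn ode_lo ode_hi ordered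
        xc_cont xc_integral w_lo w_hi init_le \<open>t \<ge> 0\<close>] y
    by simp
qed

end
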